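(* Let $n\ge1$, $t_1<\dots<t_n$, $p_0,\dots,p_n>0$, $p=\sum_{j=0}^n p_j\chi_{I_j}$ with $I_0=(-\infty,t_1]$, $I_j=(t_j,t_{j+1}]$ ($1\le j\le n-1$), $I_n=(t_n,\infty)$, and $q_k=p_k^{-1/2}$. Let $\Phi^\pm$ be the functions defined in the context. Then $\Phi^+$ and $\Phi^-$ are uniformly bounded on $(0,\infty)\times\mathbb{R}$, i.e. $\sup_{\lambda>0,\,x\in\mathbb{R}}\big(|\Phi^+(\lambda,x)|+|\Phi^-(\lambda,x)|\big)<\infty$.
   Context: For $z\in\mathbb{C}\setminus(-\infty,0]$, $\sqrt z$ is the principal square root. For $1\le k\le n$ let $$L_k(z)=\frac12\begin{bmatrix}\left(1+\frac{q_k}{q_{k-1}}\right)e^{it_k(q_{k-1}-q_k)\sqrt z} & \left(1-\frac{q_k}{q_{k-1}}\right)e^{-it_k(q_{k-1}+q_k)\sqrt z}\\ \left(1-\frac{q_k}{q_{k-1}}\right)e^{it_k(q_{k-1}+q_k)\sqrt z} & \left(1+\frac{q_k}{q_{k-1}}\right)e^{-it_k(q_{k-1}-q_k)\sqrt z}\end{bmatrix},\qquad R_k(z)=L_k(z)^{-1}.$$ Define $a_n^+=1$, $b_n^+=0$, $(a_l^+,b_l^+)^T=R_{l+1}(z)(a_{l+1}^+,b_{l+1}^+)^T$ for $l=n-1,\dots,0$; and $a_0^-=0$, $b_0^-=1$, $(a_j^-,b_j^-)^T=L_j(z)(a_{j-1}^-,b_{j-1}^-)^T$ for $j=1,\dots,n$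 (the connection coefficients). Set $\Phi^\pm(z,x)=a_k^\pm(z)e^{iq_k\sqrt z x}+b_k^\pm(z)e^{-iq_k\sqrt z x}$ for $x\in I_k$, $0\le k\le n$. These are solutions of $-(pf')'=zf$ with $f,pf'$ locally absolutely continuous. *)

theory Defs
  imports "HOL-Analysis.Analysis"
begin

text \<open>Coefficients of the piecewise constant p are p 0, ..., p n; jump points t 1 < ... < t n.\<close>

definition qc :: "(nat \<Rightarrow> real) \<Rightarrow> nat \<Rightarrow> real" where
  "qc p k = p k powr (-1/2)"

definition Iv :: "nat \<Rightarrow> (nat \<Rightarrow> real) \<Rightarrow> nat \<Rightarrow> real set" where
  "Iv n t k = (if k = 0 then {..t 1} else if k = n then {t n<..} else {t k<..t (Suc k)})"

definition Lmat :: "(nat \<Rightarrow> real) \<Rightarrow> (nat \<Rightarrow> real) \<Rightarrow> nat \<Rightarrow> complex \<Rightarrow> complex^2^2" where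
  "Lmat t p k z =
    (let a = complex_of_real (qc p (k - 1)); b = complex_of_real (qc p k);
         s = csqrt z; tk = complex_of_real (t k) in
     vector [
       vector [(1/2) * (1 + b/a) * exp (\<i> * tk * (a - b) * s),
               (1/2) * (1 - b/a) * exp (- \<i> * tk * (a + b) * s)],
       vector [(1/2) * (1 - b/a) * exp (\<i> * tk * (a + b) * s),
               (1/2) * (1 + b/a) * exp (- \<i> * tk * (a - b) * s)]])"

definition Rmat :: "(nat \<Rightarrow> real) \<Rightarrow> (nat \<Rightarrow> real) \<Rightarrow> nat \<Rightarrow> complex \<Rightarrow> complex^2^2" where
  "Rmat t p k z = matrix_inv (Lmat t p k z)"

text \<open>cplus_aux n t p z m = (a_{n-m}^+, b_{n-m}^+).\<close>
fun cplus_aux :: "nat \<Rightarrow> (nat \<Rightarrow> real) \<Rightarrow> (nat \<Rightarrow> real) \<Rightarrow> complex \<Rightarrow> nat \<Rightarrow> complex^2" where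
  "cplus_aux n t p z 0 = vector [1, 0]"
| "cplus_aux n t p z (Suc m) = Rmat t p (n - m) z *v cplus_aux n t p z m"

definition cplus :: "nat \<Rightarrow> (nat \<Rightarrow> real) \<Rightarrow> (nat \<Rightarrow> real) \<Rightarrow> complex \<Rightarrow> nat \<Rightarrow> complex^2" where
  "cplus n t p z l = cplus_aux n t p z (n - l)"

fun cminus :: "(nat \<Rightarrow> real) \<Rightarrow> (nat \<Rightarrow> real) \<Rightarrow> complex \<Rightarrow> nat \<Rightarrow> complex^2" where
  "cminus t p z 0 = vector [0, 1]"
| "cminus t p z (Suc j) = Lmat t p (Suc j) z *v cminus t p z j"

definition Phi_of :: "nat \<Rightarrow> (nat \<Rightarrow> real) \<Rightarrow> (nat \<Rightarrow> real) \<Rightarrow> (nat \<Rightarrow> complex^2) \<Rightarrow> complex \<Rightarrow> real \<Rightarrow> complex" where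
  "Phi_of n t p c z x =
     (\<Sum>k\<le>n. if x \<in> Iv n t k then
        (c k $ 1) * exp (\<i> * complex_of_real (qc p k) * csqrt z * complex_of_real x)
      + (c k $ 2) * exp (- \<i> * complex_of_real (qc p k) * csqrt z * complex_of_real x)
      else 0)"

definition Phi_plus :: "nat \<Rightarrow> (nat \<Rightarrow> real) \<Rightarrow> (nat \<Rightarrow> real) \<Rightarrow> complex \<Rightarrow> real \<Rightarrow> complex" where
  "Phi_plus n t p z x = Phi_of n t p (\<lambda>k. cplus n t p z k) z x"

definition Phi_minus :: "nat \<Rightarrow> (nat \<Rightarrow> real) \<Rightarrow> (nat \<Rightarrow> real) \<Rightarrow> complex \<Rightarrow> real \<Rightarrow> complex" where
  "Phi_minus n t p z x = Phi_of n t p (\<lambda>k. cminus t p z k) z x"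

end

theory Submission
  imports Defs
begin

text \<open>For \<open>\<lambda> > 0\<close> the square root \<open>\<surd>\<lambda>\<close> is real, so every exponential in \<open>L\<^sub>k\<close> and in \<open>\<Phi>\<^sup>\<plusminus>\<close>
  has modulus one. Writing \<open>r = q\<^sub>k / q\<^sub>k\<^sub>-\<^sub>1\<close>, the matrix \<open>L\<^sub>k\<close> has the shape
  \<open>[[c e\<^sub>1, d e\<^sub>2], [d / e\<^sub>2, c / e\<^sub>1]]\<close> with \<open>c = (1 + r)/2\<close>, \<open>d = (1 - r)/2\<close> and unimodular
  \<open>e\<^sub>1, e\<^sub>2\<close>; its determinant is \<open>c\<^sup>2 - d\<^sup>2 = r > 0\<close>, independent of \<open>\<lambda>\<close>. Hence the entries of
  \<open>L\<^sub>k\<close> and \<open>R\<^sub>k = L\<^sub>k\<^sup>-\<^sup>1\<close> are bounded uniformly in \<open>\<lambda>\<close>, so are the connection coefficients,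
  which are products of at most \<open>n\<close> of them, and so are \<open>\<Phi>\<^sup>\<plusminus>\<close>.\<close>

definition phase_mat :: "complex \<Rightarrow> complex \<Rightarrow> complex \<Rightarrow> complex \<Rightarrow> complex^2^2" where
  "phase_mat c d e1 e2 = vector [vector [c * e1, d * e2], vector [d / e2, c / e1]]"

lemma matrix_inv_eq:
  fixes A :: "'a::semiring_1^'n^'m"
  assumes "A ** B = mat 1" "B ** A = mat 1"
  shows "matrix_inv A = B"
proof -
  have inv: "matrix_inv A ** A = mat 1"
    unfolding matrix_inv_def by (rule someI2[of _ B]) (use assms in auto)
  have "matrix_inv A = matrix_inv A ** (A ** B)"
    by (simp add: assms)
  also have "\<dots> = B"
    by (simp add: inv matrix_mul_assoc)
  finally show ?thesis .
qed

lemma matrix_inv_phase_mat: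
  assumes "e1 \<noteq> 0" "e2 \<noteq> 0" "c\<^sup>2 \<noteq> d\<^sup>2"
  shows "matrix_inv (phase_mat c d e1 e2) = (\<chi> i j. phase_mat c (- d) (1 / e1) e2 $ i $ j / (c\<^sup>2 - d\<^sup>2))"
proof (rule matrix_inv_eq)
  have det: "c\<^sup>2 - d\<^sup>2 \<noteq> 0"
    using assms(3) by simp
  show "phase_mat c d e1 e2 ** (\<chi> i j. phase_mat c (- d) (1 / e1) e2 $ i $ j / (c\<^sup>2 - d\<^sup>2)) = mat 1"
    using assms det
    by (simp add: vec_eq_iff forall_2 matrix_matrix_mult_def sum_2 mat_def phase_mat_def)
       (simp add: divide_simps, algebra)
  show "(\<chi> i j. phase_mat c (- d) (1 / e1) e2 $ i $ j / (c\<^sup>2 - d\<^sup>2)) ** phase_mat c d e1 e2 = mat 1"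
    using assms det
    by (simp add: vec_eq_iff forall_2 matrix_matrix_mult_def sum_2 mat_def phase_mat_def)
       (simp add: divide_simps, algebra)
qed

lemma norm_phase_mat_entry:
  assumes "norm c \<le> B" "norm d \<le> B" "norm e1 = 1" "norm e2 = 1"
  shows "norm (phase_mat c d e1 e2 $ i $ j) \<le> B"
  using assms exhaust_2[of i] exhaust_2[of j]
  by (auto simp: phase_mat_def norm_mult norm_divide)

lemma norm_matrix_inv_phase_mat_entry:
  assumes "norm c \<le> B" "norm d \<le> B" "norm e1 = 1" "norm e2 = 1" "c\<^sup>2 \<noteq> d\<^sup>2"
  shows "norm (matrix_inv (phase_mat c d e1 e2) $ i $ j) \<le> B / norm (c\<^sup>2 - d\<^sup>2)"
proof -
  have "e1 \<noteq> 0" "e2 \<noteq> 0"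
    using assms(3,4) by auto
  moreover have "norm (phase_mat c (- d) (1 / e1) e2 $ i $ j) \<le> B"
    using assms(1-4) by (intro norm_phase_mat_entry) (auto simp: norm_divide)
  ultimately show ?thesis
    using assms(5) by (simp add: matrix_inv_phase_mat norm_divide divide_right_mono)
qed

lemma Lmat_of_real_eq_phase_mat:
  fixes t p :: "nat \<Rightarrow> real" and k :: nat
  assumes "lam \<ge> 0"
  defines "a \<equiv> qc p (k - 1)" and "b \<equiv> qc p k"
  shows "Lmat t p k (of_real lam) =
    phase_mat (of_real ((1 + b / a) / 2)) (of_real ((1 - b / a) / 2))
      (cis (t k * (a - b) * sqrt lam)) (cis (- (t k * (a + b) * sqrt lam)))"
proof -
  define s where "s = complex_of_real (sqrt lam)"
  have "csqrt (of_real lam) = s"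
    unfolding s_def using assms(1) by (rule csqrt_of_real)
  moreover have "exp (\<i> * of_real (t k) * (of_real a - of_real b) * s) = cis (t k * (a - b) * sqrt lam)"
    "exp (- \<i> * of_real (t k) * (of_real a + of_real b) * s) = cis (- (t k * (a + b) * sqrt lam))"
    "exp (\<i> * of_real (t k) * (of_real a + of_real b) * s) = 1 / cis (- (t k * (a + b) * sqrt lam))"
    "exp (- \<i> * of_real (t k) * (of_real a - of_real b) * s) = 1 / cis (t k * (a - b) * sqrt lam)"
    unfolding s_def by (simp_all add: cis_conv_exp exp_minus[symmetric] algebra_simps flip: inverse_eq_divide)
  ultimately show ?thesis
    unfolding Lmat_def Let_def phase_mat_def a_def[symmetric] b_def[symmetric]
    by simp
qed

lemma transfer_mat_entry_bounds:
  fixes t p :: "nat \<Rightarrow> real" and k :: nat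
  assumes "lam \<ge> 0" "qc p k > 0" "qc p (k - 1) > 0"
  defines "r \<equiv> qc p k / qc p (k - 1)"
  shows "norm (Lmat t p k (of_real lam) $ i $ j) \<le> (1 + r)\<^sup>2 / (2 * r)"
    and "norm (Rmat t p k (of_real lam) $ i $ j) \<le> (1 + r)\<^sup>2 / (2 * r)"
proof -
  have r: "r > 0"
    using assms(2,3) by (simp add: r_def)
  define c where "c = complex_of_real ((1 + r) / 2)"
  define d where "d = complex_of_real ((1 - r) / 2)"
  define \<theta>\<^sub>1 where "\<theta>\<^sub>1 = t k * (qc p (k - 1) - qc p k) * sqrt lam"
  define \<theta>\<^sub>2 where "\<theta>\<^sub>2 = - (t k * (qc p (k - 1) + qc p k) * sqrt lam)"
  have L: "Lmat t p k (of_real lam) = phase_mat c d (cis \<theta>\<^sub>1) (cis \<theta>\<^sub>2)"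
    unfolding c_def d_def \<theta>\<^sub>1_def \<theta>\<^sub>2_def r_def using assms(1) by (rule Lmat_of_real_eq_phase_mat)
  have c: "norm c \<le> (1 + r) / 2" and d: "norm d \<le> (1 + r) / 2"
    unfolding c_def d_def norm_of_real using r by simp_all
  have "c\<^sup>2 - d\<^sup>2 = of_real r"
    unfolding c_def d_def by (simp add: power2_eq_square field_simps)
  then have det: "c\<^sup>2 - d\<^sup>2 = of_real r" "c\<^sup>2 \<noteq> d\<^sup>2"
    using r by auto
  have "(1 + r) / 2 \<le> (1 + r)\<^sup>2 / (2 * r)" "(1 + r) / (2 * r) \<le> (1 + r)\<^sup>2 / (2 * r)"
    using r by (simp_all add: field_simps power2_eq_square)
  moreover have "norm (Lmat t p k (of_real lam) $ i $ j) \<le> (1 + r) / 2"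
    unfolding L using c d by (rule norm_phase_mat_entry) simp_all
  moreover have "norm (Rmat t p k (of_real lam) $ i $ j) \<le> (1 + r) / (2 * r)"
    using norm_matrix_inv_phase_mat_entry[OF c d _ _ det(2), of "cis \<theta>\<^sub>1" "cis \<theta>\<^sub>2" i j] r
    by (simp add: Rmat_def L det(1))
  ultimately show "norm (Lmat t p k (of_real lam) $ i $ j) \<le> (1 + r)\<^sup>2 / (2 * r)"
    and "norm (Rmat t p k (of_real lam) $ i $ j) \<le> (1 + r)\<^sup>2 / (2 * r)"
    by linarith+
qed

definition norm_l1 :: "complex^2 \<Rightarrow> real" where
  "norm_l1 v = norm (v $ 1) + norm (v $ 2)"

lemma norm_l1_matrix_vector_mult_le:
  fixes A :: "complex^2^2"
  assumes "\<And>i j. norm (A $ i $ j) \<le> B"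
  shows "norm_l1 (A *v v) \<le> 2 * B * norm_l1 v"
proof -
  have "norm ((A *v v) $ i) \<le> B * norm_l1 v" for i
  proof -
    have "norm ((A *v v) $ i) \<le> norm (A $ i $ 1) * norm (v $ 1) + norm (A $ i $ 2) * norm (v $ 2)"
      by (simp add: matrix_vector_mult_def sum_2 norm_triangle_le norm_mult)
    also have "\<dots> \<le> B * norm (v $ 1) + B * norm (v $ 2)"
      by (intro add_mono mult_right_mono assms) auto
    finally show ?thesis
      by (simp add: norm_l1_def algebra_simps)
  qed
  from this[of 1] this[of 2] show ?thesis
    by (simp add: norm_l1_def)
qed

lemma norm_l1_iterate_le:
  fixes A :: "nat \<Rightarrow> complex^2^2"
  assumes "\<And>j. j < m \<Longrightarrow> v (Suc j) = A j *v v j"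
    and "\<And>j i l. j < m \<Longrightarrow> norm (A j $ i $ l) \<le> B"
  shows "norm_l1 (v m) \<le> (2 * B) ^ m * norm_l1 (v 0)"
  using assms
proof (induction m)
  case 0
  then show ?case by simp
next
  case (Suc m)
  have "0 \<le> B"
    using Suc.prems(2)[of m 1 1] by (meson norm_ge_zero order_trans lessI)
  have "norm_l1 (v (Suc m)) \<le> 2 * B * norm_l1 (v m)"
    using Suc.prems by (simp add: norm_l1_matrix_vector_mult_le)
  also have "\<dots> \<le> 2 * B * ((2 * B) ^ m * norm_l1 (v 0))"
    using Suc \<open>0 \<le> B\<close> by (intro mult_left_mono) auto
  finally show ?case
    by (simp add: mult.assoc)
qed

lemma norm_Phi_of_le:
  assumes "lam \<ge> 0" and "\<And>k. k \<le> n \<Longrightarrow> norm_l1 (c k) \<le> K"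
  shows "norm (Phi_of n t p c (of_real lam) x) \<le> real (n + 1) * K"
proof -
  have "csqrt (of_real lam) = of_real (sqrt lam)"
    using assms(1) by (rule csqrt_of_real)
  then have unimodular:
    "norm (exp (\<i> * of_real q * csqrt (of_real lam) * of_real x)) = 1"
    "norm (exp (- \<i> * of_real q * csqrt (of_real lam) * of_real x)) = 1" for q
    by (simp_all add: norm_exp)
  have "norm (c k $ 1 * exp (\<i> * of_real q * csqrt (of_real lam) * of_real x)
      + c k $ 2 * exp (- \<i> * of_real q * csqrt (of_real lam) * of_real x)) \<le> norm_l1 (c k)" for k q
    unfolding norm_l1_def
    by (rule norm_triangle_le) (simp only: norm_mult unimodular mult_1_right order_refl)
  then have "norm (Phi_of n t p c (of_real lam) x) \<le> (\<Sum>k\<le>n. norm_l1 (c k))"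
    unfolding Phi_of_def by (intro order_trans[OF norm_sum sum_mono]) (simp add: norm_l1_def)
  also have "\<dots> \<le> real (card {..n}) * K"
    using assms(2) by (intro sum_bounded_above) simp
  finally show ?thesis
    by simp
qed

lemma norm_l1_cminus_le:
  assumes "\<And>k i l. 1 \<le> k \<Longrightarrow> k \<le> n \<Longrightarrow> norm (Lmat t p k z $ i $ l) \<le> B" and "j \<le> n"
  shows "norm_l1 (cminus t p z j) \<le> (2 * B) ^ j"
  using norm_l1_iterate_le[of j "cminus t p z" "\<lambda>j. Lmat t p (Suc j) z" B] assms
  by (simp add: norm_l1_def)

lemma norm_l1_cplus_le:
  assumes "\<And>k i l. 1 \<le> k \<Longrightarrow> k \<le> n \<Longrightarrow> norm (Rmat t p k z $ i $ l) \<le> B"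
  shows "norm_l1 (cplus n t p z j) \<le> (2 * B) ^ (n - j)"
  using norm_l1_iterate_le[of "n - j" "cplus_aux n t p z" "\<lambda>m. Rmat t p (n - m) z" B] assms
  by (simp add: cplus_def norm_l1_def)

lemma transfer_mat_uniform_bound:
  fixes t p :: "nat \<Rightarrow> real"
  assumes "\<And>k. k \<le> n \<Longrightarrow> p k > 0"
  obtains B where "B \<ge> 1"
    and "\<And>lam k i j. lam \<ge> 0 \<Longrightarrow> 1 \<le> k \<Longrightarrow> k \<le> n \<Longrightarrow> norm (Lmat t p k (of_real lam) $ i $ j) \<le> B"
    and "\<And>lam k i j. lam \<ge> 0 \<Longrightarrow> 1 \<le> k \<Longrightarrow> k \<le> n \<Longrightarrow> norm (Rmat t p k (of_real lam) $ i $ j) \<le> B"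
proof -
  define r where "r k = qc p k / qc p (k - 1)" for k
  define b where "b k = (1 + r k)\<^sup>2 / (2 * r k)" for k
  have qc_pos: "qc p k > 0" if "k \<le> n" for k
    using assms[OF that] by (simp add: qc_def)
  have b_nonneg: "0 \<le> b k" if "1 \<le> k" "k \<le> n" for k
  proof -
    have "r k > 0"
      using qc_pos[of k] qc_pos[of "k - 1"] that by (simp add: r_def)
    then show ?thesis
      by (simp add: b_def)
  qed
  have b_le: "b k \<le> 1 + (\<Sum>k=1..n. b k)" if "1 \<le> k" "k \<le> n" for k
    using member_le_sum[of k "{1..n}" b] sum_nonneg[of "{1..n}" b] b_nonneg that by auto
  show ?thesis
  proof (rule that[of "1 + (\<Sum>k=1..n. b k)"])
    show "1 \<le> 1 + (\<Sum>k=1..n. b k)"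
      using sum_nonneg[of "{1..n}" b] b_nonneg by auto
    fix lam :: real and k :: nat and i j :: 2
    assume "lam \<ge> 0" "1 \<le> k" "k \<le> n"
    then have "qc p k > 0" "qc p (k - 1) > 0"
      using qc_pos by auto
    from transfer_mat_entry_bounds[OF \<open>lam \<ge> 0\<close> this, where t = t and i = i and j = j]
    show "norm (Lmat t p k (of_real lam) $ i $ j) \<le> 1 + (\<Sum>k=1..n. b k)"
      "norm (Rmat t p k (of_real lam) $ i $ j) \<le> 1 + (\<Sum>k=1..n. b k)"
      using b_le[OF \<open>1 \<le> k\<close> \<open>k \<le> n\<close>] by (simp_all add: b_def r_def)
  qed
qed

theorem lemma3p3:
  fixes n :: nat and t p :: "nat \<Rightarrow> real"
  assumes "n \<ge> 1"
    and "\<And>j. 1 \<le> j \<Longrightarrow> j < n \<Longrightarrow> t j < t (Suc j)"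
    and "\<And>k. k \<le> n \<Longrightarrow> p k > 0"
  shows "\<exists>C. \<forall>lam::real. \<forall>x::real. lam > 0 \<longrightarrow>
           cmod (Phi_plus n t p (complex_of_real lam) x) + cmod (Phi_minus n t p (complex_of_real lam) x) \<le> C"
proof -
  obtain B where "B \<ge> 1"
    and L: "\<And>lam k i j. lam \<ge> 0 \<Longrightarrow> 1 \<le> k \<Longrightarrow> k \<le> n \<Longrightarrow> norm (Lmat t p k (of_real lam) $ i $ j) \<le> B"
    and R: "\<And>lam k i j. lam \<ge> 0 \<Longrightarrow> 1 \<le> k \<Longrightarrow> k \<le> n \<Longrightarrow> norm (Rmat t p k (of_real lam) $ i $ j) \<le> B"
    using transfer_mat_uniform_bound[where n = n and p = p and t = t, OF assms(3)] by blast
  define K where "K = (2 * B) ^ n"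
  have power_le: "(2 * B) ^ m \<le> K" if "m \<le> n" for m
    unfolding K_def using that by (rule power_increasing) (use \<open>B \<ge> 1\<close> in simp)
  have "norm (Phi_plus n t p (of_real lam) x) + norm (Phi_minus n t p (of_real lam) x) \<le> 2 * (real (n + 1) * K)"
    if "lam \<ge> 0" for lam x
  proof -
    have plus: "norm_l1 (cplus n t p (of_real lam) k) \<le> K" if "k \<le> n" for k
      by (rule order_trans[OF norm_l1_cplus_le[where n = n, OF R[OF \<open>lam \<ge> 0\<close>]] power_le[OF diff_le_self]])
    have minus: "norm_l1 (cminus t p (of_real lam) k) \<le> K" if "k \<le> n" for k
      by (rule order_trans[OF norm_l1_cminus_le[where n = n, OF L[OF \<open>lam \<ge> 0\<close>] that] power_le[OF that]])
    have "norm (Phi_plus n t p (of_real lam) x) \<le> real (n + 1) * K"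
      unfolding Phi_plus_def using that plus by (rule norm_Phi_of_le)
    moreover have "norm (Phi_minus n t p (of_real lam) x) \<le> real (n + 1) * K"
      unfolding Phi_minus_def using that minus by (rule norm_Phi_of_le)
    ultimately show ?thesis
      by simp
  qed
  then show ?thesis
    by (intro exI[of _ "2 * (real (n + 1) * K)"]) simp
qed

end
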